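(* Let $r\ge 2$ be a constant and $\lambda\le n^r$. Consider $\lambda$ isolated islands (no migration), each independently running the (1+1) EA with mutation probability $1/n$ on $\mathrm{Fork}_{n,r}$ from an independent uniformly random initial string. The expected total number of fitness evaluations (summed over all islands, one per island per round) until all $\lambda$ islands have the optimum is in $\Omega(\lambda n^{2r}\log\lambda)$.
   Context: $\mathrm{Fork}_{n,r}(x)=n+1$ if $x=0^r1^{n-r}$, $n+2$ if $x=1^{n-r}0^r$ (the optimum), and $|x|_1$ otherwise, for $n\ge 2r$. The (1+1) EA: each round create $y$ by flipping each bit of the current $x$ independently with probability $1/n$ and set $x\gets y$ if the fitness of $y$ is at least that of $x$. *)

theory Defs
  imports "HOL-Probability.Probability"
begin

text \<open>Bit strings of length n are lists of booleans; True = 1, False = 0.\<close>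

definition ones :: "bool list \<Rightarrow> nat" where
  "ones x = count_list x True"

definition fork :: "nat \<Rightarrow> nat \<Rightarrow> bool list \<Rightarrow> nat" where
  "fork n r x =
     (if x = replicate r False @ replicate (n - r) True then n + 1
      else if x = replicate (n - r) True @ replicate r False then n + 2
      else ones x)"

definition fork_opt :: "nat \<Rightarrow> nat \<Rightarrow> bool list" where
  "fork_opt n r = replicate (n - r) True @ replicate r False"

text \<open>Source of randomness: independent bits indexed by (island i, round t, position j).
  Round 0 bits are fair coins (uniform initial string); bits of round t+1 are the
  mutation mask of round t+1 (bit j flipped with probability 1/n).\<close>

definition noise :: "nat \<Rightarrow> (nat \<times> nat \<times> nat \<Rightarrow> bool) measure" where
  "noise n = PiM UNIV (\<lambda>(i, t, j).
      measure_pmf (bernoulli_pmf (if t = 0 then 1/2 else 1 / real n)))"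

definition mask :: "nat \<Rightarrow> (nat \<times> nat \<times> nat \<Rightarrow> bool) \<Rightarrow> nat \<Rightarrow> nat \<Rightarrow> bool list" where
  "mask n \<omega> i t = map (\<lambda>j. \<omega> (i, t, j)) [0..<n]"

definition ea_step :: "nat \<Rightarrow> nat \<Rightarrow> bool list \<Rightarrow> bool list \<Rightarrow> bool list" where
  "ea_step n r x m = (let y = map2 (\<noteq>) x m in if fork n r y \<ge> fork n r x then y else x)"

fun island :: "nat \<Rightarrow> nat \<Rightarrow> (nat \<times> nat \<times> nat \<Rightarrow> bool) \<Rightarrow> nat \<Rightarrow> nat \<Rightarrow> bool list" where
  "island n r \<omega> i 0 = mask n \<omega> i 0"
| "island n r \<omega> i (Suc t) = ea_step n r (island n r \<omega> i t) (mask n \<omega> i (Suc t))"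

definition rounds_all :: "nat \<Rightarrow> nat \<Rightarrow> nat \<Rightarrow> (nat \<times> nat \<times> nat \<Rightarrow> bool) \<Rightarrow> ennreal" where
  "rounds_all n r lam \<omega> =
     (if \<exists>t. \<forall>i<lam. island n r \<omega> i t = fork_opt n r
      then of_nat (LEAST t. \<forall>i<lam. island n r \<omega> i t = fork_opt n r) else \<infinity>)"

definition total_evals :: "nat \<Rightarrow> nat \<Rightarrow> nat \<Rightarrow> (nat \<times> nat \<times> nat \<Rightarrow> bool) \<Rightarrow> ennreal" where
  "total_evals n r lam \<omega> = of_nat lam * rounds_all n r lam \<omega>"

end

(*
  Each island runs the same Markov chain, driven by its own block of the noise, so the islands
  are independent: all lam islands hold the optimum after t rounds with probability p_opt(t)^lam,
  and the expected number of evaluations is at least lam * t * (1 - p_opt(t)^lam).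

  Reversing a string swaps the optimum 1^(n-r) 0^r with the trap 0^r 1^(n-r) and commutes with
  the (1+1) EA away from these two peaks.  Hence the chain enters both peaks from outside equally
  often, and the optimum gains on the trap only by jumps trap -> optimum, which need 2r specific
  bit flips (probability at most n^(-2r)).  A drift argument with potential 2^(n - |x|_1) shows
  that a peak is reached within O(n^(r+1)) rounds, after which the trap holds with probability
  at least 3/8; it then keeps probability at least 3/(8 sqrt lam) for n^(2r) ln(lam) / 4 rounds,
  so that p_opt(t)^lam <= (1 - 3/(8 sqrt lam))^lam <= 3/4 at that time t.
*)

theory Submission
  imports Defs "HOL-Analysis.Harmonic_Numbers"
begin

lemma distr_restrict_Pi_pmf:
  fixes p :: "'i \<Rightarrow> 'a pmf"
  assumes J: "finite J"
  shows "distr (Pi_pmf J d p) (PiM J (\<lambda>i. p i)) (\<lambda>f. restrict f J) = PiM J (\<lambda>i. p i)"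
proof (rule product_sigma_finite.PiM_eqI)
  interpret product_prob_space "\<lambda>i. measure_pmf (p i)"
    by (intro product_prob_spaceI) (simp add: measure_pmf.prob_space_axioms)
  show "product_sigma_finite (\<lambda>i. measure_pmf (p i))" by unfold_locales
  fix A assume A: "\<And>i. i \<in> J \<Longrightarrow> A i \<in> sets (measure_pmf (p i))"
  have "Pi\<^sub>E J A \<in> sets (PiM J (\<lambda>i. measure_pmf (p i)))"
    by (intro sets_PiM_I_finite) (use J A in auto)
  then have "emeasure (distr (Pi_pmf J d p) (PiM J (\<lambda>i. p i)) (\<lambda>f. restrict f J)) (Pi\<^sub>E J A)
      = emeasure (Pi_pmf J d p) ((\<lambda>f. restrict f J) -` Pi\<^sub>E J A)"
    by (subst emeasure_distr) (auto simp: space_PiM)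
  also have "\<dots> = emeasure (Pi_pmf J d p) (PiE_dflt J d A)"
    by (intro emeasure_eq_AE AE_pmfI) (auto simp: PiE_dflt_def set_Pi_pmf J)
  also have "\<dots> = (\<Prod>i\<in>J. emeasure (p i) (A i))"
    by (simp add: measure_pmf.emeasure_eq_measure measure_Pi_pmf_PiE_dflt J prod_ennreal)
  finally show "emeasure (distr (Pi_pmf J d p) (PiM J (\<lambda>i. p i)) (\<lambda>f. restrict f J)) (Pi\<^sub>E J A)
      = (\<Prod>i\<in>J. emeasure (p i) (A i))" .
qed (use J in simp_all)

definition merge_on :: "'a set \<Rightarrow> ('a \<Rightarrow> 'b) \<Rightarrow> ('a \<Rightarrow> 'b) \<Rightarrow> 'a \<Rightarrow> 'b" where
  "merge_on A f g k = (if k \<in> A then f k else g k)"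

lemma Pi_pmf_union_merge_on:
  assumes "finite A" "finite B" "A \<inter> B = {}"
  shows "Pi_pmf (A \<union> B) d p = map_pmf (\<lambda>(f, g). merge_on A f g) (pair_pmf (Pi_pmf A d p) (Pi_pmf B d p))"
  using Pi_pmf_union[OF assms, of d p] by (simp add: merge_on_def[abs_def])

lemma
  fixes p :: "'i \<Rightarrow> 'a::finite pmf"
  assumes J: "finite J" and local: "\<And>\<omega>. P \<omega> \<longleftrightarrow> P (merge_on J \<omega> (\<lambda>_. d))"
  shows sets_PiM_local_event: "{\<omega>. P \<omega>} \<in> sets (PiM UNIV (\<lambda>k. p k))"
    and emeasure_PiM_local_event:
      "emeasure (PiM UNIV (\<lambda>k. p k)) {\<omega>. P \<omega>} = emeasure (Pi_pmf J d p) {\<omega>. P \<omega>}"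
proof -
  interpret product_prob_space "\<lambda>k. measure_pmf (p k)" UNIV
    by (intro product_prob_spaceI) (simp add: measure_pmf.prob_space_axioms)
  let ?M = "\<lambda>k. measure_pmf (p k)"
  define X where "X = {h \<in> PiE J (\<lambda>_. UNIV). P (merge_on J h (\<lambda>_. d))}"
  have "finite X"
    using J by (rule finite_subset[rotated, OF finite_PiE]) (auto simp: X_def)
  moreover have "PiE J (\<lambda>k. {h k}) \<in> sets (PiM J ?M)" for h
    by (intro sets_PiM_I_finite) (use J in auto)
  moreover have "PiE J (\<lambda>k. {h k}) = {h}" if "h \<in> PiE J (\<lambda>_. UNIV)" for h :: "'i \<Rightarrow> 'a"
    using that by (auto simp: PiE_iff extensional_def fun_eq_iff) metis
  then have "X = (\<Union>h\<in>X. PiE J (\<lambda>k. {h k}))"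
    by (auto simp: X_def)
  ultimately have X: "X \<in> sets (PiM J ?M)"
    by (metis sets.finite_UN)
  have merge_restrict: "merge_on J (restrict \<omega> J) g = merge_on J \<omega> g" for \<omega> g :: "'i \<Rightarrow> 'a"
    by (simp add: merge_on_def fun_eq_iff)
  have "P (merge_on J (restrict \<omega> J) (\<lambda>_. d)) = P \<omega>" for \<omega>
    using local[of \<omega>] by (simp add: merge_restrict)
  then have eq: "{\<omega>. P \<omega>} = prod_emb UNIV ?M J X"
    by (auto simp: prod_emb_def X_def space_PiM)
  show "{\<omega>. P \<omega>} \<in> sets (PiM UNIV ?M)"
    unfolding eq by (rule measurable_prod_emb) (auto simp: X)
  have "emeasure (PiM UNIV ?M) {\<omega>. P \<omega>} = emeasure (PiM J ?M) X"
    unfolding eq by (rule emeasure_PiM_emb') (auto simp: J X)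
  also have "\<dots> = emeasure (distr (Pi_pmf J d p) (PiM J ?M) (\<lambda>f. restrict f J)) X"
    by (simp only: distr_restrict_Pi_pmf[OF J])
  also have "\<dots> = emeasure (Pi_pmf J d p) ((\<lambda>f. restrict f J) -` X)"
    by (subst emeasure_distr) (auto simp: X space_PiM)
  also have "\<dots> = emeasure (Pi_pmf J d p) {\<omega>. P \<omega>}"
  proof (intro emeasure_eq_AE AE_pmfI)
    fix f assume "f \<in> set_pmf (Pi_pmf J d p)"
    then have "merge_on J f (\<lambda>_. d) = f"
      by (auto simp: merge_on_def set_Pi_pmf J PiE_dflt_def)
    then show "(f \<in> (\<lambda>f. restrict f J) -` X) = (f \<in> {\<omega>. P \<omega>})"
      by (auto simp: X_def merge_restrict)
  qed auto
  finally show "emeasure (PiM UNIV ?M) {\<omega>. P \<omega>} = emeasure (Pi_pmf J d p) {\<omega>. P \<omega>}" .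
qed

lemma measure_pair_pmf_Times:
  "measure (pair_pmf M N) (A \<times> B) = measure M A * measure N B"
proof -
  have "A \<times> B = (\<lambda>(a, b). (a \<in> A, b \<in> B)) -` {(True, True)}" by auto
  then have "measure (pair_pmf M N) (A \<times> B)
      = pmf (map_pmf (\<lambda>(a, b). (a \<in> A, b \<in> B)) (pair_pmf M N)) (True, True)"
    by (simp add: pmf_map)
  also have "\<dots> = pmf (pair_pmf (map_pmf (\<lambda>a. a \<in> A) M) (map_pmf (\<lambda>b. b \<in> B) N)) (True, True)"
    by (subst map_pair[symmetric]) simp
  also have "\<dots> = measure M A * measure N B"
    by (simp add: pmf_pair pmf_map vimage_def)
  finally show ?thesis .
qed

lemma map_pair_pmf_eq_bind:
  "map_pmf (\<lambda>(a, b). h a b) (pair_pmf A B) = bind_pmf A (\<lambda>a. map_pmf (h a) B)"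
  by (simp add: pair_pmf_def map_bind_pmf map_pmf_def bind_assoc_pmf bind_return_pmf)

lemma integrable_measure_pmf_bounded:
  fixes f :: "'a \<Rightarrow> real"
  shows "(\<And>x. \<bar>f x\<bar> \<le> C) \<Longrightarrow> integrable (measure_pmf p) f"
  by (rule measure_pmf.integrable_const_bound[where B=C]) auto

lemma integral_bind_pmf_bounded:
  fixes f :: "'b \<Rightarrow> real"
  assumes nonneg: "\<And>x. 0 \<le> f x" and bounded: "\<And>x. f x \<le> C"
  shows "(\<integral>x. f x \<partial>bind_pmf P K) = (\<integral>x. (\<integral>y. f y \<partial>K x) \<partial>P)"
proof -
  have int_f: "integrable (measure_pmf Q) f" for Q
    by (rule integrable_measure_pmf_bounded[where C=C]) (use nonneg bounded in auto)
  have inner_nonneg: "0 \<le> (\<integral>y. f y \<partial>K x)" for x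
    using nonneg by simp
  have "(\<integral>y. f y \<partial>K x) \<le> (\<integral>y. C \<partial>K x)" for x
    using bounded by (intro integral_mono int_f) auto
  then have int_inner: "integrable (measure_pmf P) (\<lambda>x. \<integral>y. f y \<partial>K x)"
    by (intro integrable_measure_pmf_bounded[where C=C]) (use inner_nonneg in auto)
  have "ennreal (\<integral>x. f x \<partial>bind_pmf P K) = (\<integral>\<^sup>+x. \<integral>\<^sup>+y. ennreal (f y) \<partial>K x \<partial>P)"
    by (subst nn_integral_eq_integral[symmetric]) (use int_f nonneg in auto)
  also have "\<dots> = (\<integral>\<^sup>+x. ennreal (\<integral>y. f y \<partial>K x) \<partial>P)"
    by (intro nn_integral_cong nn_integral_eq_integral) (use int_f nonneg in auto)
  also have "\<dots> = ennreal (\<integral>x. (\<integral>y. f y \<partial>K x) \<partial>P)"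
    by (rule nn_integral_eq_integral) (use int_inner inner_nonneg in auto)
  finally show ?thesis
    using nonneg inner_nonneg by (simp add: Bochner_Integration.integral_nonneg)
qed

lemma integral_measure_pmf_split_finite:
  fixes f :: "'a \<Rightarrow> real" and M :: "'a pmf"
  assumes A: "finite A" and bounded: "\<And>x. \<bar>f x\<bar> \<le> C"
  shows "(\<integral>x. f x \<partial>M) = (\<integral>x. (if x \<in> A then 0 else f x) \<partial>M) + (\<Sum>a\<in>A. pmf M a * f a)"
proof -
  have "(\<integral>x. f x \<partial>M) = (\<integral>x. (if x \<in> A then 0 else f x) + (\<Sum>a\<in>A. f a * indicator {a} x) \<partial>M)"
    using A by (intro Bochner_Integration.integral_cong refl) (auto simp: indicator_def)
  also have "\<dots> = (\<integral>x. (if x \<in> A then 0 else f x) \<partial>M) + (\<integral>x. (\<Sum>a\<in>A. f a * indicator {a} x) \<partial>M)"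
  proof (rule Bochner_Integration.integral_add)
    have "\<bar>if x \<in> A then 0 else f x\<bar> \<le> C" for x
      using bounded[of x] by auto
    then show "integrable M (\<lambda>x. if x \<in> A then 0 else f x)"
      by (rule integrable_measure_pmf_bounded)
    show "integrable M (\<lambda>x. \<Sum>a\<in>A. f a * indicator {a} x)"
      by (intro Bochner_Integration.integrable_sum integrable_mult_right integrable_real_indicator)
        (simp_all add: less_top[symmetric])
  qed
  also have "(\<integral>x. (\<Sum>a\<in>A. f a * indicator {a} x) \<partial>M) = (\<Sum>a\<in>A. pmf M a * f a)"
    by (subst Bochner_Integration.integral_sum)
      (auto simp: measure_pmf_single less_top[symmetric] intro!: sum.cong)
  finally show ?thesis .
qed

lemma exp_le_one_minus_power:
  fixes x :: real
  assumes "0 \<le> x" "x \<le> 1/2"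
  shows "exp (- 2 * x * k) \<le> (1 - x) ^ k"
proof -
  have "- x - 2 * x\<^sup>2 \<le> ln (1 - x)"
    by (rule ln_one_minus_pos_lower_bound) (use assms in auto)
  moreover have "2 * x\<^sup>2 \<le> x"
    using assms mult_right_mono[of x "1/2" x] by (simp add: power2_eq_square)
  ultimately have ln_bound: "- 2 * x \<le> ln (1 - x)" by linarith
  have "exp (- 2 * x * k) = exp (real k * (- 2 * x))" by (simp add: algebra_simps)
  also have "\<dots> \<le> exp (real k * ln (1 - x))"
    by (intro exp_mono mult_left_mono ln_bound) simp
  also have "\<dots> = (1 - x) ^ k" using assms by (simp add: ln_realpow[symmetric])
  finally show ?thesis .
qed

lemma one_minus_power_le_exp:
  fixes y :: real
  assumes "y \<le> 1"
  shows "(1 - y) ^ k \<le> exp (- y * k)"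
proof -
  have "(1 - y) ^ k \<le> exp (- y) ^ k"
    by (intro power_mono exp_minus_ge) (use assms in auto)
  also have "\<dots> = exp (- y * k)" by (simp add: exp_of_nat_mult[symmetric] algebra_simps)
  finally show ?thesis .
qed

lemma real_power_double_ge:
  assumes "2 \<le> r" and "2048 \<le> n"
  shows "2048 * real n ^ (r + 1) \<le> real n ^ (2 * r)" and "2048 \<le> real n ^ (2 * r)"
proof -
  have "n ^ 1 \<le> n ^ (r - 1)"
    using assms by (intro power_increasing) simp_all
  then have "2048 \<le> n ^ (r - 1)"
    using assms by simp
  then have "2048 \<le> real n ^ (r - 1)"
    by (metis of_nat_le_iff of_nat_numeral of_nat_power)
  then have "2048 * real n ^ (r + 1) \<le> real n ^ (r - 1) * real n ^ (r + 1)"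
    by (rule mult_right_mono) simp
  also have "\<dots> = real n ^ ((r - 1) + (r + 1))"
    by (simp only: power_add)
  also have "(r - 1) + (r + 1) = 2 * r"
    using assms by simp
  finally show "2048 * real n ^ (r + 1) \<le> real n ^ (2 * r)" .
  moreover have "1 \<le> real n ^ (r + 1)"
    using assms by (intro one_le_power) simp
  ultimately show "2048 \<le> real n ^ (2 * r)"
    by linarith
qed

section \<open>The islands as independent Markov chains\<close>

definition bit_prob :: "nat \<Rightarrow> nat \<Rightarrow> real" where
  "bit_prob n t = (if t = 0 then 1/2 else 1 / real n)"

definition noise_bit :: "nat \<Rightarrow> nat \<times> nat \<times> nat \<Rightarrow> bool pmf" where
  "noise_bit n k = bernoulli_pmf (bit_prob n (fst (snd k)))"

lemma noise_eq_PiM_noise_bit: "noise n = PiM UNIV (\<lambda>k. noise_bit n k)"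
  unfolding noise_def noise_bit_def bit_prob_def
  by (rule arg_cong[where f="PiM UNIV"]) (auto simp: fun_eq_iff split: prod.splits)

definition mask_pmf :: "nat \<Rightarrow> nat \<Rightarrow> bool list pmf" where
  "mask_pmf n t = map_pmf (\<lambda>f. map f [0..<n]) (Pi_pmf {..<n} False (\<lambda>_. bernoulli_pmf (bit_prob n t)))"

lemma prod_list_map_conv_prod_nth: "prod_list (map f xs) = (\<Prod>j<length xs. f (xs ! j))"
proof -
  have "map f xs = map (\<lambda>j. f (xs ! j)) [0..<length xs]" by (rule nth_equalityI) auto
  then show ?thesis
    by (simp add: prod.distinct_set_conv_list[symmetric] atLeast0LessThan)
qed

lemma pmf_mask_pmf:
  "pmf (mask_pmf n t) m = (if length m = n then prod_list (map (pmf (bernoulli_pmf (bit_prob n t))) m) else 0)"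
proof (cases "length m = n")
  case False
  then have "(\<lambda>f. map f [0..<n]) -` {m} = {}" by auto
  then show ?thesis using False by (simp add: mask_pmf_def pmf_map)
next
  case True
  let ?P = "Pi_pmf {..<n} False (\<lambda>_. bernoulli_pmf (bit_prob n t))"
  define f_m where "f_m = (\<lambda>j. if j < n then m ! j else False)"
  have "(\<lambda>f. map f [0..<n]) -` {m} \<inter> set_pmf ?P = {f_m} \<inter> set_pmf ?P"
  proof (intro equalityI subsetI)
    fix f assume f: "f \<in> (\<lambda>f. map f [0..<n]) -` {m} \<inter> set_pmf ?P"
    then have "f j = False" if "n \<le> j" for j
      using that by (auto simp: set_Pi_pmf PiE_dflt_def)
    moreover have "f j = m ! j" if "j < n" for j
      using f that by auto
    ultimately show "f \<in> {f_m} \<inter> set_pmf ?P"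
      using f by (auto simp: f_m_def fun_eq_iff not_less)
  next
    fix f assume "f \<in> {f_m} \<inter> set_pmf ?P"
    moreover have "map f_m [0..<n] = m" by (rule nth_equalityI) (simp_all add: f_m_def True)
    ultimately show "f \<in> (\<lambda>f. map f [0..<n]) -` {m} \<inter> set_pmf ?P" by auto
  qed
  then have "pmf (mask_pmf n t) m = measure ?P {f_m}"
    unfolding mask_pmf_def pmf_map by (metis measure_Int_set_pmf)
  also have "\<dots> = pmf ?P f_m"
    by (rule measure_pmf_single)
  also have "\<dots> = (\<Prod>j<n. pmf (bernoulli_pmf (bit_prob n t)) (m ! j))"
    by (subst pmf_Pi) (auto simp: f_m_def)
  finally show ?thesis
    using True by (simp add: prod_list_map_conv_prod_nth)
qed

lemma length_of_set_mask_pmf: "m \<in> set_pmf (mask_pmf n t) \<Longrightarrow> length m = n"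
  by (auto simp: set_pmf_iff pmf_mask_pmf split: if_splits)

lemma mask_pmf_Suc: "mask_pmf n (Suc t) = mask_pmf n 1"
  by (simp add: mask_pmf_def bit_prob_def)

lemma map_pmf_rev_mask_pmf: "map_pmf rev (mask_pmf n t) = mask_pmf n t"
proof (rule pmf_eqI)
  fix m
  have "pmf (map_pmf rev (mask_pmf n t)) m = pmf (mask_pmf n t) (rev m)"
    by (metis pmf_map_inj' inj_on_rev rev_rev_ident)
  also have "\<dots> = pmf (mask_pmf n t) m"
    by (simp add: pmf_mask_pmf rev_map[symmetric] del: rev_map)
  finally show "pmf (map_pmf rev (mask_pmf n t)) m = pmf (mask_pmf n t) m" .
qed

definition round_coords :: "nat \<Rightarrow> nat \<Rightarrow> nat \<Rightarrow> (nat \<times> nat \<times> nat) set" where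
  "round_coords n i t = {i} \<times> {t} \<times> {..<n}"

definition island_coords :: "nat \<Rightarrow> nat \<Rightarrow> nat \<Rightarrow> (nat \<times> nat \<times> nat) set" where
  "island_coords n i t = {i} \<times> {..t} \<times> {..<n}"

definition islands_coords :: "nat \<Rightarrow> nat \<Rightarrow> nat \<Rightarrow> (nat \<times> nat \<times> nat) set" where
  "islands_coords n l t = {..<l} \<times> {..t} \<times> {..<n}"

lemma mask_distribution:
  "map_pmf (\<lambda>\<omega>. mask n \<omega> i t) (Pi_pmf (round_coords n i t) False (noise_bit n)) = mask_pmf n t"
proof -
  have "Pi_pmf (round_coords n i t) False (noise_bit n)
      = Pi_pmf (round_coords n i t) False (\<lambda>_. bernoulli_pmf (bit_prob n t))"
    by (rule Pi_pmf_cong) (auto simp: round_coords_def noise_bit_def)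
  moreover have "Pi_pmf {..<n} False (\<lambda>_. bernoulli_pmf (bit_prob n t))
      = map_pmf (\<lambda>g. g \<circ> (\<lambda>j. (i, t, j))) (Pi_pmf (round_coords n i t) False (\<lambda>_. bernoulli_pmf (bit_prob n t)))"
    by (rule Pi_pmf_bij_betw) (auto simp: round_coords_def bij_betw_def inj_on_def image_def)
  ultimately show ?thesis
    by (simp add: mask_pmf_def pmf.map_comp o_def mask_def)
qed

lemma mask_cong:
  "(\<And>j. j < n \<Longrightarrow> \<omega> (i, t, j) = \<omega>' (i, t, j)) \<Longrightarrow> mask n \<omega> i t = mask n \<omega>' i t"
  by (simp add: mask_def)

lemma island_cong:
  assumes "\<And>t' j. t' \<le> t \<Longrightarrow> j < n \<Longrightarrow> \<omega> (i, t', j) = \<omega>' (i, t', j)"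
  shows "island n r \<omega> i t = island n r \<omega>' i t"
  using assms
proof (induction t)
  case 0
  then show ?case by (simp add: mask_def)
next
  case (Suc t)
  then have "island n r \<omega> i t = island n r \<omega>' i t" by simp
  moreover have "mask n \<omega> i (Suc t) = mask n \<omega>' i (Suc t)"
    using Suc.prems by (intro mask_cong) auto
  ultimately show ?case by simp
qed

definition ea_transition :: "nat \<Rightarrow> nat \<Rightarrow> bool list \<Rightarrow> bool list pmf" where
  "ea_transition n r x = map_pmf (ea_step n r x) (mask_pmf n 1)"

fun ea_chain :: "nat \<Rightarrow> nat \<Rightarrow> nat \<Rightarrow> bool list pmf" where
  "ea_chain n r 0 = mask_pmf n 0"
| "ea_chain n r (Suc t) = bind_pmf (ea_chain n r t) (ea_transition n r)"

lemma island_distribution: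
  "map_pmf (\<lambda>\<omega>. island n r \<omega> i t) (Pi_pmf (island_coords n i t) False (noise_bit n)) = ea_chain n r t"
proof (induction t)
  case 0
  have "island_coords n i 0 = round_coords n i 0" by (auto simp: island_coords_def round_coords_def)
  then show ?case using mask_distribution[of n i 0] by simp
next
  case (Suc t)
  let ?past = "Pi_pmf (island_coords n i t) False (noise_bit n)"
  let ?now = "Pi_pmf (round_coords n i (Suc t)) False (noise_bit n)"
  let ?merge = "\<lambda>(f, g). merge_on (island_coords n i t) f g"
  have coords: "island_coords n i (Suc t) = island_coords n i t \<union> round_coords n i (Suc t)"
    by (auto simp: island_coords_def round_coords_def le_Suc_eq)
  have split: "Pi_pmf (island_coords n i (Suc t)) False (noise_bit n) = map_pmf ?merge (pair_pmf ?past ?now)"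
    unfolding coords
    by (rule Pi_pmf_union_merge_on) (auto simp: island_coords_def round_coords_def)
  have step: "island n r (?merge fg) i (Suc t) = ea_step n r (island n r (fst fg) i t) (mask n (snd fg) i (Suc t))"
    for fg
  proof -
    have "island n r (?merge fg) i t = island n r (fst fg) i t"
      by (intro island_cong) (auto simp: merge_on_def island_coords_def split: prod.splits)
    moreover have "mask n (?merge fg) i (Suc t) = mask n (snd fg) i (Suc t)"
      by (intro mask_cong) (auto simp: merge_on_def island_coords_def split: prod.splits)
    ultimately show ?thesis by simp
  qed
  have "map_pmf (\<lambda>\<omega>. island n r \<omega> i (Suc t)) (Pi_pmf (island_coords n i (Suc t)) False (noise_bit n))
      = map_pmf (\<lambda>fg. ea_step n r (island n r (fst fg) i t) (mask n (snd fg) i (Suc t))) (pair_pmf ?past ?now)"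
    unfolding split pmf.map_comp o_def step ..
  also have "\<dots> = map_pmf (\<lambda>(x, m). ea_step n r x m)
      (map_pmf (\<lambda>(f, g). (island n r f i t, mask n g i (Suc t))) (pair_pmf ?past ?now))"
    unfolding pmf.map_comp o_def by (simp only: case_prod_unfold fst_conv snd_conv)
  also have "\<dots> = map_pmf (\<lambda>(x, m). ea_step n r x m) (pair_pmf (ea_chain n r t) (mask_pmf n 1))"
    by (subst map_pair) (simp only: Suc.IH mask_distribution mask_pmf_Suc)
  also have "\<dots> = ea_chain n r (Suc t)"
    by (simp add: map_pair_pmf_eq_bind ea_transition_def[abs_def])
  finally show ?case .
qed

text \<open>Islands use disjoint blocks of the noise, hence are independent.\<close>

lemma prob_all_islands_eq:
  "measure (Pi_pmf (islands_coords n l t) False (noise_bit n)) {\<omega>. \<forall>i<l. island n r \<omega> i t = y}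
     = pmf (ea_chain n r t) y ^ l"
proof (induction l)
  case 0
  then show ?case by simp
next
  case (Suc l)
  let ?first = "Pi_pmf (islands_coords n l t) False (noise_bit n)"
  let ?last = "Pi_pmf (island_coords n l t) False (noise_bit n)"
  let ?merge = "\<lambda>(f, g). merge_on (islands_coords n l t) f g"
  have coords: "islands_coords n (Suc l) t = islands_coords n l t \<union> island_coords n l t"
    by (auto simp: islands_coords_def island_coords_def less_Suc_eq)
  have split: "Pi_pmf (islands_coords n (Suc l) t) False (noise_bit n) = map_pmf ?merge (pair_pmf ?first ?last)"
    unfolding coords
    by (rule Pi_pmf_union_merge_on) (auto simp: islands_coords_def island_coords_def)
  have "island n r (?merge (f, g)) i t = island n r f i t" if "i < l" for f g i
    using that by (intro island_cong) (auto simp: merge_on_def islands_coords_def)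
  moreover have "island n r (?merge (f, g)) l t = island n r g l t" for f g
    by (intro island_cong) (auto simp: merge_on_def islands_coords_def)
  ultimately have "?merge -` {\<omega>. \<forall>i<Suc l. island n r \<omega> i t = y}
      = {f. \<forall>i<l. island n r f i t = y} \<times> {g. island n r g l t = y}"
    by (auto simp: less_Suc_eq)
  then have "measure (Pi_pmf (islands_coords n (Suc l) t) False (noise_bit n)) {\<omega>. \<forall>i<Suc l. island n r \<omega> i t = y}
      = pmf (ea_chain n r t) y ^ l * measure ?last {g. island n r g l t = y}"
    by (simp only: split measure_map_pmf measure_pair_pmf_Times Suc.IH)
  also have "measure ?last {g. island n r g l t = y} = pmf (ea_chain n r t) y"
  proof -
    have "pmf (ea_chain n r t) y = pmf (map_pmf (\<lambda>\<omega>. island n r \<omega> l t) ?last) y"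
      by (simp only: island_distribution)
    then show ?thesis by (simp add: pmf_map vimage_def)
  qed
  finally show ?case by simp
qed

lemma ones_le_length: "ones x \<le> length x"
  unfolding ones_def by (rule count_le_length)

lemma ones_rev [simp]: "ones (rev x) = ones x"
  by (simp add: ones_def)

lemma ones_append [simp]: "ones (xs @ ys) = ones xs + ones ys"
  by (simp add: ones_def)

lemma ones_replicate [simp]: "ones (replicate k b) = (if b then k else 0)"
  by (induction k) (auto simp: ones_def)

lemma ones_eq_card: "ones x = card {i. i < length x \<and> x ! i}"
  unfolding ones_def count_list_eq_length_filter length_filter_conv_card
  by (metis (full_types))

lemma prod_list_map_bool:
  fixes f :: "bool \<Rightarrow> 'a::comm_monoid_mult"
  shows "prod_list (map f xs) = f True ^ ones xs * f False ^ (length xs - ones xs)"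
proof (induction xs)
  case (Cons b xs)
  then show ?case
    using ones_le_length[of xs] by (cases b) (simp_all add: ones_def Suc_diff_le mult_ac)
qed (simp add: ones_def)

lemma pmf_mutation_mask:
  assumes "length m = n"
  shows "pmf (mask_pmf n 1) m = (1 / real n) ^ ones m * (1 - 1 / real n) ^ (n - ones m)"
proof -
  have "1 / real n \<le> 1" by (cases n) simp_all
  then show ?thesis
    using assms by (simp add: pmf_mask_pmf prod_list_map_bool bit_prob_def)
qed

locale fork_setting =
  fixes n r :: nat
  assumes r_pos: "1 \<le> r" and n_gt: "2 * r < n"
begin

lemma n_pos: "0 < n"
  using n_gt by simp

definition trap :: "bool list" where
  "trap = replicate r False @ replicate (n - r) True"

definition opt :: "bool list" where
  "opt = replicate (n - r) True @ replicate r False"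

definition peak :: "bool list \<Rightarrow> bool" where
  "peak x \<longleftrightarrow> x \<in> {trap, opt}"

lemma peak_trap [simp]: "peak trap" and peak_opt [simp]: "peak opt"
  by (simp_all add: peak_def)

lemma length_trap [simp]: "length trap = n" and length_opt [simp]: "length opt = n"
  using n_gt by (auto simp: trap_def opt_def)

lemma nth_trap: "j < n \<Longrightarrow> trap ! j = (r \<le> j)"
  using n_gt by (auto simp: trap_def nth_append)

lemma nth_opt: "j < n \<Longrightarrow> opt ! j = (j < n - r)"
  using n_gt by (auto simp: opt_def nth_append)

lemma trap_ne_opt [simp]: "trap \<noteq> opt" "opt \<noteq> trap"
proof -
  have "trap ! 0 \<noteq> opt ! 0" using n_gt r_pos by (simp add: nth_trap nth_opt)
  then show "trap \<noteq> opt" "opt \<noteq> trap" by auto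
qed

lemma rev_trap [simp]: "rev trap = opt" and rev_opt [simp]: "rev opt = trap"
  by (simp_all add: trap_def opt_def)

lemma peak_rev [simp]: "peak (rev x) \<longleftrightarrow> peak x"
  unfolding peak_def by (metis insert_iff rev_opt rev_trap rev_rev_ident singletonD)

lemma fork_eq: "fork n r x = (if x = trap then n + 1 else if x = opt then n + 2 else ones x)"
  by (simp add: fork_def trap_def opt_def)

lemma fork_not_peak: "\<not> peak x \<Longrightarrow> fork n r x = ones x"
  by (simp add: fork_eq peak_def)

lemma ones_le_fork: "length x = n \<Longrightarrow> ones x \<le> fork n r x"
  using ones_le_length[of x] by (auto simp: fork_eq)

lemma fork_opt_eq_opt: "fork_opt n r = opt"
  by (simp add: fork_opt_def opt_def)

lemma ea_step_opt: "length m = n \<Longrightarrow> ea_step n r opt m = opt"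
  using ones_le_length[of "map2 (\<noteq>) opt m"]
  by (auto simp: ea_step_def Let_def fork_eq)

lemma ea_step_trap:
  "length m = n \<Longrightarrow> ea_step n r trap m = (if map2 (\<noteq>) trap m = opt then opt else trap)"
  using ones_le_length[of "map2 (\<noteq>) trap m"]
  by (auto simp: ea_step_def Let_def fork_eq)

lemma peak_ea_step: "length m = n \<Longrightarrow> peak x \<Longrightarrow> peak (ea_step n r x m)"
  using ea_step_trap ea_step_opt by (auto simp: peak_def)

text \<open>Away from the peaks Fork is OneMax, which is invariant under reversal.\<close>

lemma ea_step_rev:
  assumes x: "length x = n" and m: "length m = n" and not_peak: "\<not> peak x"
  shows "ea_step n r (rev x) (rev m) = rev (ea_step n r x m)"
proof -
  let ?y = "map2 (\<noteq>) x m"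
  have y: "map2 (\<noteq>) (rev x) (rev m) = rev ?y" using x m by (simp add: zip_rev rev_map)
  have fork_x: "fork n r (rev x) = fork n r x" "fork n r x \<le> n"
    using not_peak ones_le_length[of x] x by (simp_all add: fork_not_peak)
  have "fork n r (rev x) \<le> fork n r (rev ?y) \<longleftrightarrow> fork n r x \<le> fork n r ?y"
  proof (cases "peak ?y")
    case True
    then have "n + 1 \<le> fork n r (rev ?y)" "n + 1 \<le> fork n r ?y"
      by (auto simp: peak_def fork_eq)
    then show ?thesis using fork_x by auto
  next
    case False
    then show ?thesis using fork_x by (simp add: fork_not_peak)
  qed
  then show ?thesis unfolding ea_step_def Let_def y by auto
qed

section \<open>Reversal symmetry of a single island\<close>

abbreviation transition :: "bool list \<Rightarrow> bool list pmf" where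
  "transition \<equiv> ea_transition n r"

abbreviation chain :: "nat \<Rightarrow> bool list pmf" where
  "chain \<equiv> ea_chain n r"

lemma length_of_set_chain: "x \<in> set_pmf (chain t) \<Longrightarrow> length x = n"
proof (induction t arbitrary: x)
  case 0
  then show ?case by (simp add: length_of_set_mask_pmf)
next
  case (Suc t)
  then obtain y m where "y \<in> set_pmf (chain t)" "m \<in> set_pmf (mask_pmf n 1)" "x = ea_step n r y m"
    by (auto simp: ea_transition_def)
  with Suc.IH show ?case
    by (auto simp: ea_step_def Let_def dest: length_of_set_mask_pmf)
qed

lemma peak_of_set_transition: "peak x \<Longrightarrow> y \<in> set_pmf (transition x) \<Longrightarrow> peak y"
  by (auto simp: ea_transition_def intro: peak_ea_step dest: length_of_set_mask_pmf)

lemma transition_rev: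
  assumes "length x = n" and "\<not> peak x"
  shows "transition (rev x) = map_pmf rev (transition x)"
proof -
  have "transition (rev x) = map_pmf (\<lambda>m. ea_step n r (rev x) (rev m)) (mask_pmf n 1)"
    by (subst map_pmf_rev_mask_pmf[symmetric]) (simp add: ea_transition_def pmf.map_comp o_def)
  also have "\<dots> = map_pmf (\<lambda>m. rev (ea_step n r x m)) (mask_pmf n 1)"
    using assms by (intro map_pmf_cong refl ea_step_rev) (auto dest: length_of_set_mask_pmf)
  finally show ?thesis by (simp add: ea_transition_def pmf.map_comp o_def)
qed

text \<open>Identifying the two peaks makes the chain invariant under reversal, since reversal swaps
  the peaks and commutes with the dynamics everywhere else.\<close>

definition merge_peaks :: "bool list \<Rightarrow> bool list" where
  "merge_peaks x = (if x = opt then trap else x)"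

definition merged_transition :: "bool list \<Rightarrow> bool list pmf" where
  "merged_transition z = (if peak z then return_pmf trap else map_pmf merge_peaks (transition z))"

lemma merge_peaks_peak: "peak y \<Longrightarrow> merge_peaks y = trap"
  by (auto simp: merge_peaks_def peak_def)

lemma map_pmf_transition_peak:
  assumes "peak x" and "\<And>y. peak y \<Longrightarrow> f y = trap"
  shows "map_pmf f (transition x) = return_pmf trap"
  using assms peak_of_set_transition by (auto simp: map_pmf_eq_return_pmf_iff)

lemma map_pmf_merge_peaks_transition:
  "map_pmf merge_peaks (transition x) = merged_transition (merge_peaks x)"
proof (cases "peak x")
  case True
  then show ?thesis
    by (simp add: merged_transition_def merge_peaks_peak map_pmf_transition_peak)
next
  case False
  then show ?thesis by (auto simp: merged_transition_def merge_peaks_def peak_def)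
qed

lemma map_pmf_merge_peaks_rev_transition:
  assumes "length x = n"
  shows "map_pmf (merge_peaks \<circ> rev) (transition x) = merged_transition (merge_peaks (rev x))"
proof (cases "peak x")
  case True
  then show ?thesis
    by (simp add: merged_transition_def merge_peaks_peak map_pmf_transition_peak)
next
  case False
  then have not_peak_rev: "\<not> peak (rev x)" by simp
  then have "merge_peaks (rev x) = rev x"
    by (auto simp: merge_peaks_def peak_def)
  with not_peak_rev show ?thesis
    using False by (simp add: merged_transition_def transition_rev[OF assms] pmf.map_comp)
qed

lemma map_pmf_merge_peaks_rev_chain:
  "map_pmf (merge_peaks \<circ> rev) (chain t) = map_pmf merge_peaks (chain t)"
proof (induction t)
  case 0
  show ?case by (metis ea_chain.simps(1) map_pmf_rev_mask_pmf pmf.map_comp)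
next
  case (Suc t)
  have "map_pmf (merge_peaks \<circ> rev) (chain (Suc t))
      = bind_pmf (chain t) (\<lambda>x. merged_transition (merge_peaks (rev x)))"
    by (simp add: map_bind_pmf map_pmf_merge_peaks_rev_transition length_of_set_chain
        cong: bind_pmf_cong)
  also have "\<dots> = bind_pmf (map_pmf (merge_peaks \<circ> rev) (chain t)) merged_transition"
    by (simp only: bind_map_pmf o_def)
  also have "\<dots> = bind_pmf (map_pmf merge_peaks (chain t)) merged_transition"
    by (simp only: Suc.IH)
  also have "\<dots> = map_pmf merge_peaks (chain (Suc t))"
    by (simp add: bind_map_pmf map_bind_pmf map_pmf_merge_peaks_transition)
  finally show ?case .
qed

definition p_jump :: real where
  "p_jump = pmf (transition trap) opt"

definition p_trap :: "nat \<Rightarrow> real" where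
  "p_trap t = pmf (chain t) trap"

definition p_opt :: "nat \<Rightarrow> real" where
  "p_opt t = pmf (chain t) opt"

definition inflow :: "bool list \<Rightarrow> nat \<Rightarrow> real" where
  "inflow y t = (\<integral>x. (if peak x then 0 else pmf (transition x) y) \<partial>chain t)"

lemma transition_opt: "transition opt = return_pmf opt"
  unfolding ea_transition_def map_pmf_eq_return_pmf_iff
  by (auto intro: ea_step_opt length_of_set_mask_pmf)

lemma pmf_transition_trap_trap: "pmf (transition trap) trap = 1 - p_jump"
proof -
  have "set_pmf (transition trap) \<subseteq> {trap, opt}"
    using peak_of_set_transition[of trap] by (auto simp: peak_def)
  then have "measure (transition trap) {trap, opt} = 1"
    by (simp add: measure_pmf.prob_eq_1 AE_measure_pmf_iff subset_eq)
  then show ?thesis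
    by (simp add: measure_measure_pmf_finite p_jump_def)
qed

lemma p_jump_nonneg: "0 \<le> p_jump" and p_jump_le_1: "p_jump \<le> 1"
  by (simp_all add: p_jump_def pmf_le_1)

lemma p_trap_le_1: "p_trap t \<le> 1"
  by (simp add: p_trap_def pmf_le_1)

lemma p_opt_le_1_minus_p_trap: "p_opt t \<le> 1 - p_trap t"
proof -
  have "measure (chain t) {trap, opt} = p_trap t + p_opt t"
    by (simp add: measure_measure_pmf_finite p_trap_def p_opt_def)
  then show ?thesis using measure_pmf.prob_le_1[of "chain t" "{trap, opt}"] by simp
qed

lemma inflow_nonneg: "0 \<le> inflow y t"
  unfolding inflow_def by (intro Bochner_Integration.integral_nonneg) auto

lemma integral_pmf_transition_split:
  "(\<integral>x. pmf (transition x) y \<partial>chain t)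
     = inflow y t + p_trap t * pmf (transition trap) y + p_opt t * pmf (transition opt) y"
  unfolding inflow_def peak_def p_trap_def p_opt_def
  by (subst integral_measure_pmf_split_finite[where A="{trap, opt}" and C=1]) (auto simp: pmf_le_1)

lemma p_trap_Suc: "p_trap (Suc t) = inflow trap t + (1 - p_jump) * p_trap t"
proof -
  have "p_trap (Suc t) = (\<integral>x. pmf (transition x) trap \<partial>chain t)"
    by (simp add: p_trap_def pmf_bind)
  then show ?thesis
    by (simp add: integral_pmf_transition_split pmf_transition_trap_trap transition_opt)
qed

lemma p_opt_Suc: "p_opt (Suc t) = inflow opt t + p_jump * p_trap t + p_opt t"
proof -
  have "p_opt (Suc t) = (\<integral>x. pmf (transition x) opt \<partial>chain t)"
    by (simp add: p_opt_def pmf_bind)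
  then show ?thesis
    by (simp add: integral_pmf_transition_split transition_opt p_jump_def mult.commute)
qed

lemma inflow_trap_eq_inflow_opt: "inflow trap t = inflow opt t"
proof -
  define \<Phi> where "\<Phi> z = (if peak z then 0 else pmf (transition z) trap)" for z
  have "inflow trap t = (\<integral>x. \<Phi> (merge_peaks x) \<partial>chain t)"
    unfolding inflow_def
    by (intro Bochner_Integration.integral_cong refl) (auto simp: \<Phi>_def merge_peaks_def peak_def)
  also have "\<dots> = (\<integral>z. \<Phi> z \<partial>map_pmf merge_peaks (chain t))"
    by simp
  also have "\<dots> = (\<integral>z. \<Phi> z \<partial>map_pmf (merge_peaks \<circ> rev) (chain t))"
    by (simp only: map_pmf_merge_peaks_rev_chain)
  also have "\<dots> = (\<integral>x. \<Phi> (merge_peaks (rev x)) \<partial>chain t)"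
    by simp
  also have "\<dots> = inflow opt t"
    unfolding inflow_def
  proof (intro integral_cong_AE AE_pmfI)
    fix x assume "x \<in> set_pmf (chain t)"
    then have x: "length x = n" by (rule length_of_set_chain)
    show "\<Phi> (merge_peaks (rev x)) = (if peak x then 0 else pmf (transition x) opt)"
    proof (cases "peak x")
      case True
      then show ?thesis by (auto simp: \<Phi>_def merge_peaks_def peak_def)
    next
      case False
      then have "\<not> peak (rev x)" by simp
      then have "merge_peaks (rev x) = rev x"
        by (auto simp: merge_peaks_def peak_def)
      moreover have "pmf (transition (rev x)) trap = pmf (transition x) opt"
        using transition_rev[OF x False] pmf_map_inj'[of rev _ opt] by simp
      ultimately show ?thesis using False by (simp add: \<Phi>_def)
    qed
  qed simp_all
  finally show ?thesis .
qed

lemma p_opt_0: "p_opt 0 = p_trap 0"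
  using pmf_map_inj'[of rev "mask_pmf n 0" trap]
  by (simp add: p_opt_def p_trap_def map_pmf_rev_mask_pmf)

text \<open>By the symmetry, the optimum gains on the trap only through jumps out of the trap.\<close>

lemma p_opt_minus_p_trap_le: "p_opt t - p_trap t \<le> 2 * p_jump * t"
proof (induction t)
  case 0
  then show ?case by (simp add: p_opt_0)
next
  case (Suc t)
  have "p_opt (Suc t) - p_trap (Suc t) = p_opt t - p_trap t + 2 * p_jump * p_trap t"
    using p_trap_Suc[of t] p_opt_Suc[of t] inflow_trap_eq_inflow_opt[of t]
    by (simp add: algebra_simps)
  also have "\<dots> \<le> 2 * p_jump * t + 2 * p_jump"
    using Suc.IH mult_left_mono[OF p_trap_le_1[of t], of "2 * p_jump"] p_jump_nonneg by linarith
  finally show ?case by (simp add: algebra_simps)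
qed

lemma p_trap_add_ge: "(1 - p_jump) ^ k * p_trap s \<le> p_trap (s + k)"
proof (induction k)
  case (Suc k)
  have "(1 - p_jump) ^ Suc k * p_trap s \<le> (1 - p_jump) * p_trap (s + k)"
    using mult_left_mono[OF Suc.IH, of "1 - p_jump"] p_jump_le_1 by simp
  also have "\<dots> \<le> p_trap (s + Suc k)"
    using p_trap_Suc[of "s + k"] inflow_nonneg[of trap "s + k"] by simp
  finally show ?case .
qed simp

definition jump_mask :: "bool list" where
  "jump_mask = replicate r True @ replicate (n - 2 * r) False @ replicate r True"

lemma length_jump_mask: "length jump_mask = n"
  using n_gt by (simp add: jump_mask_def)

lemma ea_step_trap_eq_opt_imp_jump_mask:
  assumes m: "length m = n" and jump: "ea_step n r trap m = opt"
  shows "m = jump_mask"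
proof (rule nth_equalityI)
  have flip: "map2 (\<noteq>) trap m = opt"
    using jump ea_step_trap[OF m] by (auto split: if_splits)
  fix j assume "j < length m"
  then have j: "j < n" using m by simp
  have "(trap ! j \<noteq> m ! j) = opt ! j"
    using arg_cong[OF flip, of "\<lambda>y. y ! j"] j m by simp
  then show "m ! j = jump_mask ! j"
    using j n_gt by (auto simp: nth_trap nth_opt jump_mask_def nth_append)
qed (simp add: m length_jump_mask)

lemma p_jump_le: "p_jump \<le> (1 / real n) ^ (2 * r)"
proof -
  have "p_jump = measure (mask_pmf n 1) ({m. ea_step n r trap m = opt} \<inter> set_pmf (mask_pmf n 1))"
    by (simp add: p_jump_def ea_transition_def pmf_map vimage_def measure_Int_set_pmf)
  also have "\<dots> \<le> measure (mask_pmf n 1) {jump_mask}"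
    by (intro measure_pmf.finite_measure_mono)
      (auto intro: ea_step_trap_eq_opt_imp_jump_mask dest: length_of_set_mask_pmf)
  also have "\<dots> = (1 / real n) ^ (2 * r) * (1 - 1 / real n) ^ (n - 2 * r)"
    using pmf_mutation_mask[OF length_jump_mask] by (simp add: measure_pmf_single jump_mask_def mult_2)
  also have "\<dots> \<le> (1 / real n) ^ (2 * r)"
    using n_pos by (intro mult_left_le power_le_one) auto
  finally show ?thesis .
qed

section \<open>Drift towards the peaks\<close>

definition potential :: "bool list \<Rightarrow> real" where
  "potential x = (if peak x then 0 else 2 ^ (n - ones x))"

definition p_progress :: real where
  "p_progress = (1 / real n) ^ r * (1 - 1 / real n) ^ n"

lemma potential_nonneg: "0 \<le> potential x"
  by (simp add: potential_def)

lemma potential_le: "potential x \<le> 2 ^ n"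
  by (auto simp: potential_def intro: power_increasing)

lemma p_progress_le_1: "p_progress \<le> 1"
  using n_pos by (auto simp: p_progress_def intro!: mult_le_one power_le_one)

lemma p_progress_le_pmf_mask:
  assumes m: "length m = n" and ones_m: "ones m \<le> r"
  shows "p_progress \<le> pmf (mask_pmf n 1) m"
proof -
  have "p_progress \<le> (1 / real n) ^ ones m * (1 - 1 / real n) ^ (n - ones m)"
    unfolding p_progress_def using n_pos ones_m by (intro mult_mono power_decreasing) auto
  then show ?thesis using pmf_mutation_mask[OF m] by simp
qed

lemma p_progress_ge: "(1 / real n) ^ r / 16 \<le> p_progress"
proof -
  have "exp 2 = exp (1 :: real) ^ 2" by (simp flip: exp_of_nat_mult)
  also have "\<dots> \<le> 3 ^ 2" by (intro power_mono exp_le) simp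
  finally have "1 / 16 \<le> exp (- 2 :: real)" by (simp add: exp_minus field_simps)
  also have "exp (- 2) = exp (- 2 * (1 / real n) * real n)" using n_pos by simp
  also have "\<dots> \<le> (1 - 1 / real n) ^ n"
    by (rule exp_le_one_minus_power) (use n_gt r_pos in auto)
  finally have "(1 / real n) ^ r * (1 / 16) \<le> (1 / real n) ^ r * (1 - 1 / real n) ^ n"
    by (intro mult_left_mono) simp_all
  then show ?thesis by (simp add: p_progress_def)
qed

lemma potential_ea_step_le:
  assumes x: "length x = n" and m: "length m = n"
  shows "potential (ea_step n r x m) \<le> potential x"
proof (cases "peak x")
  case True
  then show ?thesis using peak_ea_step[OF m] by (simp add: potential_def)
next
  case not_peak: False
  let ?y = "map2 (\<noteq>) x m"
  show ?thesis
  proof (cases "fork n r x \<le> fork n r ?y")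
    case accepted: True
    then have "ea_step n r x m = ?y" by (simp add: ea_step_def Let_def)
    moreover have "ones x \<le> ones ?y" if "\<not> peak ?y"
      using accepted not_peak that by (simp add: fork_not_peak)
    ultimately show ?thesis
      using not_peak potential_nonneg[of x] by (auto simp: potential_def intro: power_increasing)
  next
    case False
    then show ?thesis by (simp add: ea_step_def Let_def)
  qed
qed

text \<open>From a non-peak string a single mutation of probability at least p_progress halves the
  potential: flip a zero bit, or, from the all-ones string, flip the first r bits to reach the trap.\<close>

lemma potential_flip_zero_bit:
  assumes x: "length x = n" "\<not> peak x" and j: "j < n" "\<not> x ! j"
  shows "potential (ea_step n r x (map (\<lambda>k. k = j) [0..<n])) \<le> potential x / 2"
proof -
  let ?y = "map2 (\<noteq>) x (map (\<lambda>k. k = j) [0..<n])"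
  have "{i. i < length ?y \<and> ?y ! i} = insert j {i. i < length x \<and> x ! i}"
    using x j by auto
  then have ones_y: "ones ?y = Suc (ones x)"
    using j by (simp add: ones_eq_card)
  then have "fork n r x \<le> fork n r ?y"
    using ones_le_fork[of ?y] fork_not_peak[OF x(2)] x by simp
  then have "ea_step n r x (map (\<lambda>k. k = j) [0..<n]) = ?y"
    by (simp add: ea_step_def Let_def)
  moreover have "n - ones x = Suc (n - ones ?y)"
    using ones_y ones_le_length[of ?y] x by simp
  ultimately show ?thesis
    using x by (simp add: potential_def)
qed

lemma ea_step_all_ones: "ea_step n r (replicate n True) (replicate r True @ replicate (n - r) False) = trap"
proof -
  have flip: "map2 (\<noteq>) (replicate n True) (replicate r True @ replicate (n - r) False) = trap"
    using n_gt by (intro nth_equalityI) (auto simp: nth_trap nth_append)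
  have "ones trap = n - r" "ones opt = n - r"
    by (simp_all add: trap_def opt_def)
  then have "\<not> peak (replicate n True)"
    using n_gt r_pos by (auto simp: peak_def dest: arg_cong[where f = ones])
  then have "fork n r (replicate n True) \<le> fork n r trap"
    by (simp add: fork_not_peak) (simp add: fork_eq)
  then show ?thesis
    unfolding ea_step_def Let_def flip by simp
qed

lemma progress_mask_exists:
  assumes x: "length x = n" "\<not> peak x"
  obtains m where "length m = n" "ones m \<le> r" "potential (ea_step n r x m) \<le> potential x / 2"
proof (cases "\<exists>j<n. \<not> x ! j")
  case True
  then obtain j where j: "j < n" "\<not> x ! j" by blast
  have "{i. i < n \<and> map (\<lambda>k. k = j) [0..<n] ! i} = {j}" using j by auto
  then have "ones (map (\<lambda>k. k = j) [0..<n]) = 1"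
    by (simp add: ones_eq_card)
  with r_pos show ?thesis
    by (intro that[OF _ _ potential_flip_zero_bit[OF x j]]) simp_all
next
  case False
  then have "x = replicate n True"
    using x by (intro nth_equalityI) auto
  then have "ea_step n r x (replicate r True @ replicate (n - r) False) = trap"
    by (simp add: ea_step_all_ones)
  moreover have "potential trap = 0" by (simp add: potential_def peak_def)
  ultimately show ?thesis
    using that[of "replicate r True @ replicate (n - r) False"] n_gt potential_nonneg[of x] by simp
qed

lemma expected_potential_transition:
  assumes x: "length x = n"
  shows "(\<integral>y. potential y \<partial>transition x) \<le> (1 - p_progress / 2) * potential x"
proof (cases "peak x")
  case True
  then have "(\<integral>y. potential y \<partial>transition x) = 0"
    by (intro integral_eq_zero_AE AE_pmfI) (auto simp: potential_def dest: peak_of_set_transition)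
  then show ?thesis using True by (simp add: potential_def)
next
  case False
  obtain good where good: "length good = n" "ones good \<le> r"
    "potential (ea_step n r x good) \<le> potential x / 2"
    using progress_mask_exists[OF x False] by blast
  let ?bound = "\<lambda>m. potential x - potential x / 2 * indicator {good} m"
  have "(\<integral>y. potential y \<partial>transition x) = (\<integral>m. potential (ea_step n r x m) \<partial>mask_pmf n 1)"
    by (simp add: ea_transition_def)
  also have "\<dots> \<le> (\<integral>m. ?bound m \<partial>mask_pmf n 1)"
  proof (rule integral_mono_AE)
    show "integrable (mask_pmf n 1) (\<lambda>m. potential (ea_step n r x m))"
      by (rule integrable_measure_pmf_bounded[where C="2 ^ n"])
        (simp add: potential_le potential_nonneg abs_of_nonneg)
    show "integrable (mask_pmf n 1) ?bound"
      by (rule integrable_measure_pmf_bounded[where C="potential x"])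
        (use potential_nonneg[of x] in \<open>auto simp: indicator_def\<close>)
    show "AE m in mask_pmf n 1. potential (ea_step n r x m) \<le> ?bound m"
      using good(3) potential_ea_step_le[OF x]
      by (intro AE_pmfI) (auto simp: indicator_def dest: length_of_set_mask_pmf)
  qed
  also have "\<dots> = (\<integral>m. potential x \<partial>mask_pmf n 1) - (\<integral>m. potential x / 2 * indicator {good} m \<partial>mask_pmf n 1)"
    by (rule Bochner_Integration.integral_diff)
      (auto intro!: integrable_real_indicator simp: less_top[symmetric])
  also have "\<dots> = potential x - potential x / 2 * pmf (mask_pmf n 1) good"
    by (simp add: measure_pmf_single)
  also have "\<dots> \<le> potential x - potential x / 2 * p_progress"
    using p_progress_le_pmf_mask[OF good(1,2)] potential_nonneg[of x] by (simp add: mult_left_mono)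
  finally show ?thesis by (simp add: algebra_simps)
qed

lemma expected_potential_chain: "(\<integral>x. potential x \<partial>chain t) \<le> (1 - p_progress / 2) ^ t * 2 ^ n"
proof (induction t)
  case 0
  have "(\<integral>x. potential x \<partial>chain 0) \<le> (\<integral>x. 2 ^ n \<partial>chain 0)"
    by (intro integral_mono integrable_measure_pmf_bounded[where C="2 ^ n"])
      (simp_all add: potential_le potential_nonneg abs_of_nonneg)
  then show ?case by simp
next
  case (Suc t)
  have "(\<integral>x. potential x \<partial>chain (Suc t)) = (\<integral>x. (\<integral>y. potential y \<partial>transition x) \<partial>chain t)"
    by (simp add: integral_bind_pmf_bounded[where C="2 ^ n"] potential_nonneg potential_le)
  also have "\<dots> \<le> (\<integral>x. (1 - p_progress / 2) * potential x \<partial>chain t)"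
  proof (rule integral_mono_AE)
    show "integrable (chain t) (\<lambda>x. \<integral>y. potential y \<partial>transition x)"
    proof (rule integrable_measure_pmf_bounded[where C="2 ^ n"])
      fix x
      have "(\<integral>y. potential y \<partial>transition x) \<le> (\<integral>y. 2 ^ n \<partial>transition x)"
        by (intro integral_mono integrable_measure_pmf_bounded[where C="2 ^ n"])
          (simp_all add: potential_le potential_nonneg abs_of_nonneg)
      then show "\<bar>\<integral>y. potential y \<partial>transition x\<bar> \<le> 2 ^ n"
        by (simp add: potential_nonneg abs_of_nonneg)
    qed
    show "integrable (chain t) (\<lambda>x. (1 - p_progress / 2) * potential x)"
      by (intro integrable_mult_right integrable_measure_pmf_bounded[where C="2 ^ n"])
        (simp add: potential_le potential_nonneg abs_of_nonneg)
    show "AE x in chain t. (\<integral>y. potential y \<partial>transition x) \<le> (1 - p_progress / 2) * potential x"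
      by (intro AE_pmfI expected_potential_transition length_of_set_chain)
  qed
  also have "\<dots> \<le> (1 - p_progress / 2) ^ Suc t * 2 ^ n"
    using mult_left_mono[OF Suc.IH, of "1 - p_progress / 2"] p_progress_le_1 by simp
  finally show ?case .
qed

lemma p_not_peak_le_expected_potential: "1 - p_trap t - p_opt t \<le> (\<integral>x. potential x \<partial>chain t)"
proof -
  have "1 - p_trap t - p_opt t = measure (chain t) (UNIV - {trap, opt})"
    using measure_pmf.prob_compl[of "{trap, opt}" "chain t"]
    by (simp add: measure_measure_pmf_finite p_trap_def p_opt_def)
  also have "\<dots> = (\<integral>x. indicator (UNIV - {trap, opt}) x \<partial>chain t)"
    by simp
  also have "\<dots> \<le> (\<integral>x. potential x \<partial>chain t)"
    by (intro integral_mono integrable_measure_pmf_bounded[where C="2 ^ n"])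
      (auto simp: indicator_def potential_def peak_def)
  finally show ?thesis .
qed

lemma p_trap_ge: "(1 - (1 - p_progress / 2) ^ t * 2 ^ n - 2 * p_jump * t) / 2 \<le> p_trap t"
proof -
  have "1 - p_trap t - p_opt t \<le> (1 - p_progress / 2) ^ t * 2 ^ n"
    using p_not_peak_le_expected_potential expected_potential_chain by (rule order_trans)
  moreover have "p_opt t - p_trap t \<le> 2 * p_jump * t"
    by (rule p_opt_minus_p_trap_le)
  moreover have "1 - a - b \<le> e \<Longrightarrow> b - a \<le> d \<Longrightarrow> (1 - e - d) / 2 \<le> a" for a b e d :: real
    by argo
  ultimately show ?thesis by blast
qed

section \<open>The lower bound\<close>

lemma p_trap_burn_in:
  assumes r: "2 \<le> r" and n_large: "2048 \<le> n"
  shows "3/8 \<le> p_trap (128 * n ^ (r + 1))"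
proof -
  define s where "s = 128 * n ^ (r + 1)"
  have s: "real s = 128 * real n ^ (r + 1)" by (simp add: s_def)
  note big = real_power_double_ge(1)[OF r n_large]
  have "4 * real n = (1 / real n) ^ r / 16 / 2 * real s"
    using n_pos by (simp add: s field_simps)
  also have "\<dots> \<le> p_progress / 2 * real s"
    using p_progress_ge by (intro mult_right_mono) simp_all
  finally have exp_bound: "exp (- (p_progress / 2) * real s) \<le> exp (- (4 * real n))"
    by simp
  have "(1 - p_progress / 2) ^ s \<le> exp (- (p_progress / 2) * real s)"
    by (rule one_minus_power_le_exp) (use p_progress_le_1 in simp)
  also note exp_bound
  finally have "(1 - p_progress / 2) ^ s \<le> exp (- (4 * real n))" .
  moreover have "(2 :: real) ^ n \<le> exp 1 ^ n"
    using exp_ge_add_one_self[of 1] by (intro power_mono) simp_all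
  ultimately have "(1 - p_progress / 2) ^ s * 2 ^ n \<le> exp (- (4 * real n)) * exp 1 ^ n"
    using p_progress_le_1 by (intro mult_mono) simp_all
  also have "\<dots> = 1 / exp (3 * real n)"
    by (simp add: exp_of_nat_mult[symmetric] exp_minus field_simps flip: exp_add)
  also have "\<dots> \<le> 1 / 8"
  proof (rule divide_left_mono)
    show "8 \<le> exp (3 * real n)"
      using exp_ge_add_one_self[of "3 * real n"] n_large by linarith
  qed simp_all
  finally have drift: "(1 - p_progress / 2) ^ s * 2 ^ n \<le> 1 / 8" .
  have "2 * p_jump * real s \<le> 2 * (1 / real n) ^ (2 * r) * real s"
    using p_jump_le by (intro mult_right_mono mult_left_mono) simp_all
  also have "\<dots> = 256 * real n ^ (r + 1) / real n ^ (2 * r)"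
    by (simp add: s power_one_over)
  also have "\<dots> \<le> 1 / 8"
    using big n_pos by (simp add: field_simps)
  finally have "2 * p_jump * real s \<le> 1 / 8" .
  with drift p_trap_ge[of s] show ?thesis
    unfolding s_def by argo
qed

lemma p_trap_long_run:
  assumes r: "2 \<le> r" and n_large: "2048 \<le> n" and t_ge: "128 * n ^ (r + 1) \<le> t"
  shows "3 / 8 * exp (- 2 * real t / real n ^ (2 * r)) \<le> p_trap t"
proof -
  define s where "s = 128 * n ^ (r + 1)"
  define N where "N = real n ^ (2 * r)"
  have N_large: "2 \<le> N"
    using real_power_double_ge(2)[OF r n_large] by (simp add: N_def)
  have "exp (- 2 * real t / N) = exp (- 2 * (1 / N) * real t)"
    by simp
  also have "\<dots> \<le> (1 - 1 / N) ^ t"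
    by (rule exp_le_one_minus_power) (use N_large in simp_all)
  also have "\<dots> \<le> (1 - 1 / N) ^ (t - s)"
    using N_large by (intro power_decreasing) simp_all
  also have "\<dots> \<le> (1 - p_jump) ^ (t - s)"
  proof (rule power_mono)
    show "1 - 1 / N \<le> 1 - p_jump"
      using p_jump_le by (simp add: N_def power_one_over)
  qed (use N_large in simp)
  finally have "3 / 8 * exp (- 2 * real t / N) \<le> p_trap s * (1 - p_jump) ^ (t - s)"
    using p_trap_burn_in[OF r n_large] by (intro mult_mono) (simp_all add: s_def)
  also have "\<dots> \<le> p_trap t"
    using p_trap_add_ge[of "t - s" s] t_ge by (simp add: s_def mult.commute)
  finally show ?thesis by (simp add: N_def)
qed

lemma p_opt_power_le:
  assumes r: "2 \<le> r" and n_large: "2048 \<le> n" and lam: "1 \<le> lam"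
    and t_ge: "128 * n ^ (r + 1) \<le> t" and t_le: "real t \<le> real n ^ (2 * r) * ln (real lam) / 4"
  shows "p_opt t ^ lam \<le> 3 / 4"
proof -
  define L where "L = ln (real lam)"
  have L: "0 \<le> L" "real lam = exp L"
    using lam by (simp_all add: L_def)
  have "- L / 2 \<le> - 2 * real t / real n ^ (2 * r)"
    using t_le n_pos by (simp add: L_def field_simps)
  then have "3 / 8 * exp (- L / 2) \<le> 3 / 8 * exp (- 2 * real t / real n ^ (2 * r))"
    by simp
  also have "\<dots> \<le> p_trap t"
    by (rule p_trap_long_run[OF r n_large t_ge])
  finally have "3 / 8 * exp (- L / 2) \<le> p_trap t" .
  then have "3 / 8 * exp (- L / 2) * real lam \<le> p_trap t * real lam"
    by (rule mult_right_mono) simp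
  moreover have "3 / 8 * exp (- L / 2) * real lam = 3 / 8 * exp (L / 2)"
    unfolding L(2) by (simp add: exp_add[symmetric])
  moreover have "3 / 8 \<le> 3 / 8 * exp (L / 2)"
    using L(1) by simp
  ultimately have "3 / 8 \<le> p_trap t * real lam"
    by linarith
  have "p_opt t ^ lam \<le> (1 - p_trap t) ^ lam"
    by (intro power_mono p_opt_le_1_minus_p_trap) (simp add: p_opt_def)
  also have "\<dots> \<le> exp (- p_trap t * real lam)"
    using one_minus_power_le_exp p_trap_le_1 by blast
  also have "\<dots> \<le> exp (- (3 / 8))"
    using \<open>3 / 8 \<le> p_trap t * real lam\<close> by simp
  also have "\<dots> \<le> 3 / 4"
    using exp_ge_add_one_self[of "3 / 8 :: real"] by (simp add: exp_minus field_simps)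
  finally show ?thesis .
qed

lemma island_opt_absorbing: "island n r \<omega> i t = opt \<Longrightarrow> island n r \<omega> i (t + k) = opt"
  by (induction k) (simp_all add: ea_step_opt mask_def)

lemma total_evals_ge:
  assumes "\<exists>i<lam. island n r \<omega> i t \<noteq> opt"
  shows "ennreal (real lam * real t) \<le> total_evals n r lam \<omega>"
proof (cases "\<exists>t. \<forall>i<lam. island n r \<omega> i t = fork_opt n r")
  case True
  define T where "T = (LEAST t. \<forall>i<lam. island n r \<omega> i t = fork_opt n r)"
  have all_opt: "\<forall>i<lam. island n r \<omega> i T = opt"
    using LeastI_ex[OF True] by (simp add: T_def fork_opt_eq_opt)
  have "t < T"
  proof (rule ccontr)
    assume "\<not> t < T"
    then have "island n r \<omega> i (T + (t - T)) = opt" if "i < lam" for i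
      using all_opt that island_opt_absorbing by blast
    with assms \<open>\<not> t < T\<close> show False by auto
  qed
  then have "real lam * real t \<le> real lam * real T"
    by (intro mult_left_mono) auto
  then show ?thesis
    using True by (simp add: total_evals_def rounds_all_def T_def ennreal_of_nat_eq_real_of_nat
        ennreal_mult[symmetric] ennreal_leI)
next
  case False
  have "rounds_all n r lam \<omega> = \<infinity>"
    unfolding rounds_all_def using False by (rule if_not_P)
  moreover have "0 < lam" using assms by auto
  ultimately show ?thesis
    by (simp add: total_evals_def ennreal_mult_eq_top_iff)
qed

lemma
  shows sets_not_all_opt: "{\<omega>. \<exists>i<lam. island n r \<omega> i t \<noteq> opt} \<in> sets (noise n)"
    and emeasure_not_all_opt:
      "emeasure (noise n) {\<omega>. \<exists>i<lam. island n r \<omega> i t \<noteq> opt} = ennreal (1 - p_opt t ^ lam)"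
proof -
  let ?J = "islands_coords n lam t"
  let ?P = "Pi_pmf ?J False (noise_bit n)"
  let ?not_all_opt = "\<lambda>\<omega>. \<exists>i<lam. island n r \<omega> i t \<noteq> opt"
  have J: "finite ?J" by (simp add: islands_coords_def)
  have "island n r (merge_on ?J \<omega> (\<lambda>_. False)) i t = island n r \<omega> i t" if "i < lam" for \<omega> i
    using that by (intro island_cong) (auto simp: merge_on_def islands_coords_def)
  then have local: "?not_all_opt \<omega> \<longleftrightarrow> ?not_all_opt (merge_on ?J \<omega> (\<lambda>_. False))" for \<omega>
    by auto
  show "{\<omega>. \<exists>i<lam. island n r \<omega> i t \<noteq> opt} \<in> sets (noise n)"
    unfolding noise_eq_PiM_noise_bit by (rule sets_PiM_local_event[where P = ?not_all_opt, OF J local])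
  have "emeasure (noise n) {\<omega>. \<exists>i<lam. island n r \<omega> i t \<noteq> opt}
      = emeasure ?P (UNIV - {\<omega>. \<forall>i<lam. island n r \<omega> i t = opt})"
    unfolding noise_eq_PiM_noise_bit emeasure_PiM_local_event[where P = ?not_all_opt, OF J local]
    by (simp add: set_diff_eq)
  also have "\<dots> = ennreal (1 - measure ?P {\<omega>. \<forall>i<lam. island n r \<omega> i t = opt})"
    using measure_pmf.prob_compl[of "{\<omega>. \<forall>i<lam. island n r \<omega> i t = opt}" ?P]
    by (simp add: measure_pmf.emeasure_eq_measure)
  also have "measure ?P {\<omega>. \<forall>i<lam. island n r \<omega> i t = opt} = p_opt t ^ lam"
    unfolding p_opt_def by (rule prob_all_islands_eq)
  finally show "emeasure (noise n) {\<omega>. \<exists>i<lam. island n r \<omega> i t \<noteq> opt} = ennreal (1 - p_opt t ^ lam)" .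
qed

lemma expected_total_evals_ge:
  "ennreal (real lam * real t * (1 - p_opt t ^ lam)) \<le> (\<integral>\<^sup>+ \<omega>. total_evals n r lam \<omega> \<partial>noise n)"
proof -
  let ?E = "{\<omega>. \<exists>i<lam. island n r \<omega> i t \<noteq> opt}"
  have "p_opt t ^ lam \<le> 1"
    by (intro power_le_one) (simp_all add: p_opt_def pmf_le_1)
  then have "ennreal (real lam * real t * (1 - p_opt t ^ lam)) = ennreal (real lam * real t) * emeasure (noise n) ?E"
    by (simp add: emeasure_not_all_opt ennreal_mult)
  also have "\<dots> = (\<integral>\<^sup>+ \<omega>. ennreal (real lam * real t) * indicator ?E \<omega> \<partial>noise n)"
    by (rule nn_integral_cmult_indicator[symmetric]) (rule sets_not_all_opt)
  also have "\<dots> \<le> (\<integral>\<^sup>+ \<omega>. total_evals n r lam \<omega> \<partial>noise n)"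
    by (intro nn_integral_mono) (auto simp: indicator_def intro: total_evals_ge)
  finally show ?thesis .
qed

lemma expected_total_evals_lower_bound:
  assumes r: "2 \<le> r" and n_large: "2048 \<le> n" and lam: "2 \<le> lam"
  shows "ennreal (1/32 * real lam * real n ^ (2 * r) * ln (real lam))
           \<le> (\<integral>\<^sup>+ \<omega>. total_evals n r lam \<omega> \<partial>noise n)"
proof -
  define N where "N = real n ^ (2 * r)"
  define L where "L = ln (real lam)"
  define t where "t = nat \<lfloor>N * L / 4\<rfloor>"
  have "ln 2 \<le> L"
    using lam by (simp add: L_def)
  with ln2_ge_two_thirds have "2 / 3 \<le> L"
    by linarith
  have N: "2048 * real n ^ (r + 1) \<le> N" "2048 \<le> N"
    unfolding N_def using real_power_double_ge[OF r n_large] by simp_all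
  then have NL_large: "16 \<le> N * L"
    using mult_mono[OF N(2) \<open>2 / 3 \<le> L\<close>] by simp
  have t: "real t = of_int \<lfloor>N * L / 4\<rfloor>"
    using NL_large by (simp add: t_def)
  have t_le: "real t \<le> N * L / 4"
    unfolding t by (rule of_int_floor_le)
  have t_ge: "N * L / 8 \<le> real t"
    using NL_large unfolding t by linarith
  have "real (128 * n ^ (r + 1)) \<le> N / 16"
    using N(1) by simp
  also have "\<dots> \<le> N * L / 8"
    using N(2) \<open>2 / 3 \<le> L\<close> by simp
  finally have "128 * n ^ (r + 1) \<le> t"
    using t_ge by linarith
  then have "p_opt t ^ lam \<le> 3 / 4"
    using p_opt_power_le[OF r n_large _ _ t_le[unfolded N_def L_def]] lam by simp
  then have "1/32 * real lam * N * L \<le> real lam * real t * (1 - p_opt t ^ lam)"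
    using mult_left_mono[OF mult_mono[OF t_ge, of "1 / 4" "1 - p_opt t ^ lam"], of "real lam"] NL_large
    by simp
  then have "ennreal (1/32 * real lam * N * L) \<le> ennreal (real lam * real t * (1 - p_opt t ^ lam))"
    by (rule ennreal_leI)
  also have "\<dots> \<le> (\<integral>\<^sup>+ \<omega>. total_evals n r lam \<omega> \<partial>noise n)"
    by (rule expected_total_evals_ge)
  finally show ?thesis
    by (simp add: N_def L_def)
qed

end

theorem corollary3:
  fixes r :: nat
  assumes "r \<ge> 2"
  shows "\<exists>c > 0. \<exists>n0. \<forall>n \<ge> n0. \<forall>lam :: nat. 1 \<le> lam \<longrightarrow> lam \<le> n ^ r \<longrightarrow>
           (\<integral>\<^sup>+ \<omega>. total_evals n r lam \<omega> \<partial>noise n)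
             \<ge> ennreal (c * real lam * real n ^ (2 * r) * ln (real lam))"
proof (intro exI conjI allI impI)
  show "(0 :: real) < 1/32" by simp
  fix n lam :: nat
  assume n: "max 2048 (2 * r + 1) \<le> n" and lam: "1 \<le> lam" and "lam \<le> n ^ r"
  \<comment> \<open>The bound holds for every lam.\<close>
  show "ennreal (1/32 * real lam * real n ^ (2 * r) * ln (real lam))
          \<le> (\<integral>\<^sup>+ \<omega>. total_evals n r lam \<omega> \<partial>noise n)"
  proof (cases "lam = 1")
    case False
    interpret fork_setting n r
      using assms n by unfold_locales auto
    show ?thesis
      using assms n lam False by (intro expected_total_evals_lower_bound) auto
  qed simp
qed

end
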